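(* Let $n\geq 2$ and let $L_n$ be the graph of linear $[n]$-phenylene (defined in the context). Then the base polynomial counting distances between pairs of degree-3 vertices of $L_n$ is \begin{eqnarray*} H^{3,3}_{b}(L_{n}) &=& 4(n-1)x+6\sum_{k=2}^{n-1}(n-k)x^{3k-2}+2\sum_{k=1}^{n-1}(2n-2k-1)x^{3k-1}\\&&+6\sum_{k=1}^{n-2}(n-k-1)x^{3k}. \end{eqnarray*}
   Context: All graphs are finite, simple and connected; $d(u,v)$ denotes the shortest-path distance and $d_u$ the degree of a vertex $u$. For a graph $G$ and a degree $p$, the base polynomial is $H^{p,p}_{b}(G)=\sum x^{d(u,v)}$, where the sum runs over all unordered pairs $\{u,v\}$ of distinct vertices of $G$ both of degree $p$. Linear $[n]$-phenylene $L_n$: take $n$ hexagons $H_1,\dots,H_n$; hexagon $H_i$ is the 6-cycle $a_i b_i c_i d_i e_i f_i a_i$. For each $i=1,\dots,n-1$ add the two edges $b_i f_{i+1}$ and $c_i e_{i+1}$, so that $b_i c_i e_{i+1} f_{i+1}$ is a 4-cycle joining consecutive hexagons. Thus $L_n$ has $6n$ vertices, $2n+4$ of degree 2 and $4n-4$ of degree 3. *)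

theory Defs
  imports Main "HOL-Library.Product_Lexorder"
begin

definition walk :: "('v \<Rightarrow> 'v \<Rightarrow> bool) \<Rightarrow> 'v list \<Rightarrow> bool" where
  "walk E xs \<longleftrightarrow> xs \<noteq> [] \<and> (\<forall>i. Suc i < length xs \<longrightarrow> E (xs ! i) (xs ! Suc i))"

definition gdist :: "('v \<Rightarrow> 'v \<Rightarrow> bool) \<Rightarrow> 'v \<Rightarrow> 'v \<Rightarrow> nat" where
  "gdist E u v = (LEAST k. \<exists>xs. walk E xs \<and> hd xs = u \<and> last xs = v \<and> length xs = Suc k)"

definition degree :: "'v set \<Rightarrow> ('v \<Rightarrow> 'v \<Rightarrow> bool) \<Rightarrow> 'v \<Rightarrow> nat" where
  "degree V E u = card {v \<in> V. E u v}"

text \<open>Base polynomial H^{p,p}_b evaluated at x: sum over unordered pairs {u,v} of distinct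
  vertices of degree p (each unordered pair counted once via u < v) of x^d(u,v).\<close>
definition base_poly :: "'v::linorder set \<Rightarrow> ('v \<Rightarrow> 'v \<Rightarrow> bool) \<Rightarrow> nat \<Rightarrow> 'a::comm_ring_1 \<Rightarrow> 'a" where
  "base_poly V E p x = (\<Sum>(u, v) \<in> {(u, v). u \<in> V \<and> v \<in> V \<and> u < v \<and> degree V E u = p \<and> degree V E v = p}.
      x ^ gdist E u v)"

text \<open>Vertex (i, l): hexagon i \<in> {1..n}, letter l \<in> {0..5} standing for a,b,c,d,e,f.\<close>
definition phen_V :: "nat \<Rightarrow> (nat \<times> nat) set" where
  "phen_V n = {1..n} \<times> {0..<6}"

text \<open>Links b_i f_{i+1} and c_i e_{i+1}.\<close>
definition phen_link :: "nat \<times> nat \<Rightarrow> nat \<times> nat \<Rightarrow> bool" where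
  "phen_link u v \<longleftrightarrow> fst v = fst u + 1 \<and>
     ((snd u = 1 \<and> snd v = 5) \<or> (snd u = 2 \<and> snd v = 4))"

definition phen_E :: "nat \<Rightarrow> nat \<times> nat \<Rightarrow> nat \<times> nat \<Rightarrow> bool" where
  "phen_E n u v \<longleftrightarrow> u \<in> phen_V n \<and> v \<in> phen_V n \<and>
     ((fst u = fst v \<and> (snd v = (snd u + 1) mod 6 \<or> snd u = (snd v + 1) mod 6))
      \<or> phen_link u v \<or> phen_link v u)"

end

theory Submission
  imports Defs
begin

text \<open>
  Put the vertices of L_n on a ladder: f_i, a_i, b_i occupy columns 3i, 3i+1, 3i+2 of the top
  rail and e_i, d_i, c_i the same columns of the bottom rail. The links b_i f_(i+1) and
  c_i e_(i+1) continue the rails and the rungs are f_i e_i and b_i c_i, so only the columns 3i+1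
  lack a rung. Hence d(u,v) is the column difference, plus 1 if u and v lie on different rails,
  except that d(a_i, d_i) = 3. The degree-3 vertices are b_i, c_i (i < n) and e_i, f_i (i > 1).
  Passing from L_(m+1) to L_(m+2) adds four of them, which contribute 4x + 2x^2 among themselves
  and 2(1+x)^3 * sum_(j<m) x^(3j+2) together with the old ones. By induction the polynomial of
  L_(m+2) is 4(m+1)x + 2(m+1)x^2 + 2x^2(1+x)^3 * sum_(j<m) (m-j) x^(3j), which is the stated
  one after reindexing its three sums.
\<close>

lemma walk_snoc_iff:
  assumes "xs \<noteq> []"
  shows "walk E (xs @ [v]) \<longleftrightarrow> walk E xs \<and> E (last xs) v"
proof -
  have last: "last xs = (xs @ [v]) ! (length xs - 1)" and len: "Suc (length xs - 1) = length xs"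
    using assms by (simp_all add: last_conv_nth nth_append)
  show ?thesis
  proof
    assume "walk E (xs @ [v])"
    then have step: "E ((xs @ [v]) ! i) ((xs @ [v]) ! Suc i)" if "i < length xs" for i
      using that by (simp add: walk_def)
    have "walk E xs"
      unfolding walk_def
    proof (intro conjI allI impI)
      fix i assume "Suc i < length xs"
      then show "E (xs ! i) (xs ! Suc i)" using step[of i] by (simp add: nth_append)
    qed (rule assms)
    moreover have "E (last xs) v"
      using step[of "length xs - 1"] assms unfolding len last[symmetric] by simp
    ultimately show "walk E xs \<and> E (last xs) v" ..
  next
    assume walk: "walk E xs \<and> E (last xs) v"
    show "walk E (xs @ [v])"
      unfolding walk_def
    proof (intro conjI allI impI)
      fix i assume "Suc i < length (xs @ [v])"
      then consider "Suc i < length xs" | "i = length xs - 1" by fastforce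
      then show "E ((xs @ [v]) ! i) ((xs @ [v]) ! Suc i)"
        by cases (use walk len last in \<open>auto simp: walk_def nth_append\<close>)
    qed simp
  qed
qed

lemma walk_length_gt_dist:
  assumes "d u u = 0" and step: "\<And>v w. E v w \<Longrightarrow> d u w \<le> d u v + 1"
  shows "walk E xs \<Longrightarrow> hd xs = u \<Longrightarrow> d u (last xs) < length xs"
proof (induction xs rule: rev_induct)
  case Nil then show ?case by (simp add: walk_def)
next
  case (snoc v xs)
  show ?case
  proof (cases "xs = []")
    case True with snoc.prems assms(1) show ?thesis by simp
  next
    case False
    then have "walk E xs" "E (last xs) v"
      using walk_snoc_iff[OF False] snoc.prems(1) by blast+
    moreover have "hd xs = u" using snoc.prems(2) False by simp
    ultimately have "d u (last xs) < length xs" using snoc.IH by blast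
    then show ?thesis using step[OF \<open>E (last xs) v\<close>] by simp
  qed
qed

lemma walk_from_dist_descent:
  assumes "d u u = 0"
    and descent: "\<And>v. v \<in> V \<Longrightarrow> v \<noteq> u \<Longrightarrow> \<exists>w\<in>V. E w v \<and> d u w + 1 = d u v"
  shows "v \<in> V \<Longrightarrow> d u v = k \<Longrightarrow> \<exists>xs. walk E xs \<and> hd xs = u \<and> last xs = v \<and> length xs = Suc k"
proof (induction k arbitrary: v)
  case 0
  then have "v = u" using descent by fastforce
  then show ?case by (intro exI[of _ "[u]"]) (simp add: walk_def)
next
  case (Suc k)
  then have "v \<noteq> u" using \<open>d u u = 0\<close> by auto
  then obtain w where "w \<in> V" "E w v" "d u w = k"
    using descent Suc.prems by fastforce
  moreover obtain xs where "walk E xs" "hd xs = u" "last xs = w" "length xs = Suc k"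
    using Suc.IH \<open>w \<in> V\<close> \<open>d u w = k\<close> by blast
  moreover have "xs \<noteq> []" using \<open>length xs = Suc k\<close> by auto
  ultimately show ?case
    by (intro exI[of _ "xs @ [v]"]) (simp add: walk_snoc_iff)
qed

lemma gdist_eqI:
  assumes "d u u = 0"
    and "\<And>v w. E v w \<Longrightarrow> d u w \<le> d u v + 1"
    and "\<And>v. v \<in> V \<Longrightarrow> v \<noteq> u \<Longrightarrow> \<exists>w\<in>V. E w v \<and> d u w + 1 = d u v"
    and "v \<in> V"
  shows "gdist E u v = d u v"
  unfolding gdist_def
proof (rule Least_equality)
  show "\<exists>xs. walk E xs \<and> hd xs = u \<and> last xs = v \<and> length xs = Suc (d u v)"
    using walk_from_dist_descent[of d u V E v] assms(1,3,4) by blast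
next
  fix k assume "\<exists>xs. walk E xs \<and> hd xs = u \<and> last xs = v \<and> length xs = Suc k"
  then show "d u v \<le> k"
    using walk_length_gt_dist[of d u E] assms(1,2) by fastforce
qed

definition pair_sum :: "('v::linorder \<Rightarrow> 'v \<Rightarrow> 'a::comm_monoid_add) \<Rightarrow> 'v set \<Rightarrow> 'a" where
  "pair_sum f S = (\<Sum>(u, v) \<in> {(u, v). u \<in> S \<and> v \<in> S \<and> u < v}. f u v)"

lemma pair_sum_empty [simp]: "pair_sum f {} = 0"
  by (simp add: pair_sum_def)

lemma pair_sum_insert:
  assumes "finite S" "w \<notin> S" and sym: "\<And>a b. f a b = f b a"
  shows "pair_sum f (insert w S) = pair_sum f S + (\<Sum>a\<in>S. f a w)"
proof -
  let ?P = "{(u, v). u \<in> S \<and> v \<in> S \<and> u < v}"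
  let ?L = "(\<lambda>a. (a, w)) ` {a \<in> S. a < w}"
  let ?R = "(\<lambda>a. (w, a)) ` {a \<in> S. w < a}"
  have pairs: "{(u, v). u \<in> insert w S \<and> v \<in> insert w S \<and> u < v} = ?P \<union> ?L \<union> ?R"
    by auto
  have "finite ?P"
    by (rule finite_subset[of _ "S \<times> S"]) (auto simp: \<open>finite S\<close>)
  moreover have "finite ?L" "finite ?R" "?P \<inter> ?L = {}" "(?P \<union> ?L) \<inter> ?R = {}"
    using assms(1,2) by auto
  ultimately have "pair_sum f (insert w S)
      = pair_sum f S + (\<Sum>(u, v)\<in>?L. f u v) + (\<Sum>(u, v)\<in>?R. f u v)"
    unfolding pair_sum_def pairs by (simp add: sum.union_disjoint)
  also have "(\<Sum>(u, v)\<in>?L. f u v) = (\<Sum>a\<in>{a \<in> S. a < w}. f a w)"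
    by (subst sum.reindex) (auto simp: inj_on_def)
  also have "(\<Sum>(u, v)\<in>?R. f u v) = (\<Sum>a\<in>{a \<in> S. w < a}. f a w)"
    by (subst sum.reindex) (auto simp: inj_on_def sym)
  also have "pair_sum f S + (\<Sum>a\<in>{a \<in> S. a < w}. f a w) + (\<Sum>a\<in>{a \<in> S. w < a}. f a w)
      = pair_sum f S + (\<Sum>a\<in>S. f a w)"
  proof -
    have "{a \<in> S. a < w} \<union> {a \<in> S. w < a} = S"
      using assms(2) by (auto simp: not_less order.order_iff_strict)
    moreover have "(\<Sum>a\<in>{a \<in> S. a < w} \<union> {a \<in> S. w < a}. f a w)
        = (\<Sum>a\<in>{a \<in> S. a < w}. f a w) + (\<Sum>a\<in>{a \<in> S. w < a}. f a w)"
      using assms(1) by (intro sum.union_disjoint) auto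
    ultimately show ?thesis by (simp add: add.assoc)
  qed
  finally show ?thesis .
qed

lemma pair_sum_union:
  assumes "finite S" "finite T" "S \<inter> T = {}" and sym: "\<And>a b. f a b = f b a"
  shows "pair_sum f (S \<union> T) = pair_sum f S + pair_sum f T + (\<Sum>a\<in>S. \<Sum>b\<in>T. f a b)"
  using assms(2,3)
proof (induction T rule: finite_induct)
  case empty then show ?case by simp
next
  case (insert w T)
  then have "w \<notin> S \<union> T" "finite (S \<union> T)" by (auto simp: assms(1))
  then have "pair_sum f (S \<union> insert w T) = pair_sum f (S \<union> T) + (\<Sum>a\<in>S \<union> T. f a w)"
    using pair_sum_insert[of "S \<union> T" w f] sym by simp
  also have "\<dots> = pair_sum f S + pair_sum f (insert w T) + (\<Sum>a\<in>S. \<Sum>b\<in>insert w T. f a b)"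
    using insert assms(1) pair_sum_insert[of T w f] sym
    by (simp add: sum.union_disjoint sum.distrib algebra_simps)
  finally show ?case .
qed

definition ramp :: "'a::comm_semiring_1 \<Rightarrow> nat \<Rightarrow> 'a" where
  "ramp y m = (\<Sum>j<m. of_nat (m - j) * y ^ j)"

lemma ramp_0 [simp]: "ramp y 0 = 0"
  by (simp add: ramp_def)

lemma ramp_eq_sum_lessThan_Suc: "ramp y m = (\<Sum>j<Suc m. of_nat (m - j) * y ^ j)"
  by (simp add: ramp_def)

lemma ramp_Suc: "ramp y (Suc m) = ramp y m + (\<Sum>j<Suc m. y ^ j)"
proof -
  have "ramp y (Suc m) = (\<Sum>j<Suc m. of_nat (m - j) * y ^ j + y ^ j)"
    unfolding ramp_def by (rule sum.cong) (auto simp: Suc_diff_le algebra_simps)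
  then show ?thesis
    by (simp only: sum.distrib flip: ramp_eq_sum_lessThan_Suc)
qed

lemma ramp_Suc_shift: "ramp y (Suc m) = of_nat (Suc m) + y * ramp y m"
  unfolding ramp_def sum.lessThan_Suc_shift by (simp add: sum_distrib_left mult_ac)

lemma ramp_Suc_add_ramp: "ramp y (Suc m) + ramp y m = (\<Sum>j<Suc m. of_nat (2 * m + 1 - 2 * j) * y ^ j)"
  unfolding ramp_def[of _ "Suc m"] ramp_eq_sum_lessThan_Suc[of _ m] sum.distrib[symmetric]
  by (rule sum.cong) (auto simp: mult_2 simp flip: distrib_right of_nat_add)

lemma sum_atLeastAtMost_eq_sum_lessThan:
  "(\<Sum>k = a..b. g k) = (\<Sum>j<Suc b - a. g (j + a))"
  by (rule sum.reindex_bij_witness[where i="\<lambda>j. j + a" and j="\<lambda>k. k - a"]) auto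

definition phen_col :: "nat \<times> nat \<Rightarrow> nat" where
  "phen_col v = 3 * fst v + (if snd v = 4 \<or> snd v = 5 then 0 else if snd v = 0 \<or> snd v = 3 then 1 else 2)"

definition phen_top :: "nat \<times> nat \<Rightarrow> bool" where
  "phen_top v \<longleftrightarrow> snd v = 5 \<or> snd v = 0 \<or> snd v = 1"

definition phen_dist :: "nat \<times> nat \<Rightarrow> nat \<times> nat \<Rightarrow> nat" where
  "phen_dist u v = (phen_col u - phen_col v) + (phen_col v - phen_col u) +
     (if phen_top u = phen_top v then 0
      else if phen_col u = phen_col v \<and> phen_col u mod 3 = 1 then 3 else 1)"

lemma phen_vertex_cases:
  assumes "v \<in> phen_V n"
  obtains i l where "v = (i, l)" "1 \<le> i" "i \<le> n" "l = 0 \<or> l = 1 \<or> l = 2 \<or> l = 3 \<or> l = 4 \<or> l = 5"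
proof -
  obtain i l where v: "v = (i, l)" by force
  with assms have "1 \<le> i" "i \<le> n" "l < 6" by (auto simp: phen_V_def)
  moreover from \<open>l < 6\<close> have "l = 0 \<or> l = 1 \<or> l = 2 \<or> l = 3 \<or> l = 4 \<or> l = 5" by auto
  ultimately show thesis using that v by blast
qed

lemma phen_E_ladder:
  assumes "phen_E n v w"
  shows "phen_top v = phen_top w \<and> (phen_col w = phen_col v + 1 \<or> phen_col v = phen_col w + 1)
    \<or> phen_top v \<noteq> phen_top w \<and> phen_col v = phen_col w \<and> phen_col v mod 3 \<noteq> 1"
proof -
  from assms have "v \<in> phen_V n" "w \<in> phen_V n" by (simp_all add: phen_E_def)
  obtain i l where "v = (i, l)" "l = 0 \<or> l = 1 \<or> l = 2 \<or> l = 3 \<or> l = 4 \<or> l = 5"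
    using \<open>v \<in> phen_V n\<close> by (rule phen_vertex_cases)
  moreover obtain j m where "w = (j, m)" "m = 0 \<or> m = 1 \<or> m = 2 \<or> m = 3 \<or> m = 4 \<or> m = 5"
    using \<open>w \<in> phen_V n\<close> by (rule phen_vertex_cases)
  ultimately show ?thesis using assms
    by (elim disjE) (simp_all add: phen_E_def phen_link_def phen_col_def phen_top_def mod_Suc)
qed

lemma phen_col_bounds: "v \<in> phen_V n \<Longrightarrow> 3 \<le> phen_col v \<and> phen_col v \<le> 3 * n + 2"
  by (erule phen_vertex_cases) (auto simp: phen_col_def)

lemma phen_eq_if_col_top_eq:
  assumes "u \<in> phen_V n" "v \<in> phen_V n" "phen_col u = phen_col v" "phen_top u = phen_top v"
  shows "u = v"
proof -
  obtain i l where "u = (i, l)" "l = 0 \<or> l = 1 \<or> l = 2 \<or> l = 3 \<or> l = 4 \<or> l = 5"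
    using assms(1) by (rule phen_vertex_cases)
  moreover obtain j m where "v = (j, m)" "m = 0 \<or> m = 1 \<or> m = 2 \<or> m = 3 \<or> m = 4 \<or> m = 5"
    using assms(2) by (rule phen_vertex_cases)
  ultimately show ?thesis using assms(3,4)
    by (elim disjE) (simp_all add: phen_col_def phen_top_def, presburger+)
qed

lemma phen_left_neighbour:
  assumes "v \<in> phen_V n" "3 < phen_col v"
  shows "\<exists>w\<in>phen_V n. phen_E n w v \<and> phen_col w + 1 = phen_col v \<and> phen_top w = phen_top v"
  using assms
proof (cases rule: phen_vertex_cases)
  case (1 i l)
  let ?w = "if l = 5 then (i - 1, 1) else if l = 0 then (i, 5) else if l = 1 then (i, 0)
    else if l = 4 then (i - 1, 2) else if l = 3 then (i, 4) else (i, 3)"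
  from 1(4) show ?thesis
    using 1(1-3) assms(2)
    by (elim disjE; intro bexI[of _ ?w]; auto simp: phen_E_def phen_link_def phen_V_def phen_col_def phen_top_def)
qed

lemma phen_right_neighbour:
  assumes "v \<in> phen_V n" "phen_col v < 3 * n + 2"
  shows "\<exists>w\<in>phen_V n. phen_E n w v \<and> phen_col w = phen_col v + 1 \<and> phen_top w = phen_top v"
  using assms
proof (cases rule: phen_vertex_cases)
  case (1 i l)
  let ?w = "if l = 5 then (i, 0) else if l = 0 then (i, 1) else if l = 1 then (i + 1, 5)
    else if l = 4 then (i, 3) else if l = 3 then (i, 2) else (i + 1, 4)"
  from 1(4) show ?thesis
    using 1(1-3) assms(2)
    by (elim disjE; intro bexI[of _ ?w]; auto simp: phen_E_def phen_link_def phen_V_def phen_col_def phen_top_def)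
qed

lemma phen_rung_neighbour:
  assumes "v \<in> phen_V n" "phen_col v mod 3 \<noteq> 1"
  shows "\<exists>w\<in>phen_V n. phen_E n w v \<and> phen_col w = phen_col v \<and> phen_top w \<noteq> phen_top v"
  using assms
proof (cases rule: phen_vertex_cases)
  case (1 i l)
  let ?w = "if l = 5 then (i, 4) else if l = 4 then (i, 5) else if l = 1 then (i, 2) else (i, 1)"
  from 1(4) show ?thesis
    using 1(1-3) assms(2)
    by (elim disjE; intro bexI[of _ ?w]; auto simp: phen_E_def phen_link_def phen_V_def phen_col_def phen_top_def)
qed

lemma phen_dist_self: "phen_dist u u = 0"
  by (simp add: phen_dist_def)

lemma phen_dist_sym: "phen_dist u v = phen_dist v u"
  unfolding phen_dist_def by (cases "phen_col u = phen_col v") (simp_all add: eq_commute)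

lemma phen_dist_same_top:
  "phen_top u = phen_top v \<Longrightarrow> phen_dist u v = (phen_col u - phen_col v) + (phen_col v - phen_col u)"
  by (simp add: phen_dist_def)

lemma phen_dist_other_top:
  "phen_top u \<noteq> phen_top v \<Longrightarrow> phen_col u \<noteq> phen_col v \<or> phen_col u mod 3 \<noteq> 1 \<Longrightarrow>
    phen_dist u v = (phen_col u - phen_col v) + (phen_col v - phen_col u) + 1"
  by (auto simp: phen_dist_def)

lemma phen_dist_missing_rung:
  "phen_top u \<noteq> phen_top v \<Longrightarrow> phen_col u = phen_col v \<Longrightarrow> phen_col u mod 3 = 1 \<Longrightarrow>
    phen_dist u v = 3"
  by (simp add: phen_dist_def)

lemma phen_dist_apart:
  "phen_col u < phen_col v \<Longrightarrow>
    phen_dist u v = phen_col v - phen_col u + (if phen_top u = phen_top v then 0 else 1)"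
  by (simp add: phen_dist_def)

lemma phen_dist_other_top_ge:
  "phen_top u \<noteq> phen_top v \<Longrightarrow> (phen_col u - phen_col v) + (phen_col v - phen_col u) + 1 \<le> phen_dist u v"
  by (simp add: phen_dist_def)

lemma phen_dist_row_step_le:
  assumes "phen_top v = phen_top w" "phen_col w = phen_col v + 1 \<or> phen_col v = phen_col w + 1"
  shows "phen_dist u w \<le> phen_dist u v + 1"
proof (cases "phen_top u = phen_top v")
  case True
  with assms(1) have "phen_dist u w = (phen_col u - phen_col w) + (phen_col w - phen_col u)"
    "phen_dist u v = (phen_col u - phen_col v) + (phen_col v - phen_col u)"
    by (simp_all add: phen_dist_same_top)
  with assms(2) show ?thesis by linarith
next
  case False
  then have v: "(phen_col u - phen_col v) + (phen_col v - phen_col u) + 1 \<le> phen_dist u v"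
    by (rule phen_dist_other_top_ge)
  show ?thesis
  proof (cases "phen_col u = phen_col w \<and> phen_col u mod 3 = 1")
    case True
    with False assms(1) have "phen_dist u w = 3"
      by (intro phen_dist_missing_rung) auto
    with True assms(2) v show ?thesis by linarith
  next
    case False
    with \<open>phen_top u \<noteq> phen_top v\<close> assms(1)
    have "phen_dist u w = (phen_col u - phen_col w) + (phen_col w - phen_col u) + 1"
      by (intro phen_dist_other_top) auto
    with assms(2) v show ?thesis by linarith
  qed
qed

lemma phen_dist_rung_step_le:
  assumes "phen_top v \<noteq> phen_top w" "phen_col v = phen_col w" "phen_col v mod 3 \<noteq> 1"
  shows "phen_dist u w \<le> phen_dist u v + 1"
proof (cases "phen_top u = phen_top v")
  case True
  with assms have "phen_dist u w = (phen_col u - phen_col w) + (phen_col w - phen_col u) + 1"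
    by (intro phen_dist_other_top) auto
  moreover from True have "phen_dist u v = (phen_col u - phen_col v) + (phen_col v - phen_col u)"
    by (rule phen_dist_same_top)
  ultimately show ?thesis using assms(2) by simp
next
  case False
  with assms(1) have "phen_dist u w = (phen_col u - phen_col w) + (phen_col w - phen_col u)"
    by (intro phen_dist_same_top) auto
  moreover from False have "(phen_col u - phen_col v) + (phen_col v - phen_col u) + 1 \<le> phen_dist u v"
    by (rule phen_dist_other_top_ge)
  ultimately show ?thesis using assms(2) by simp
qed

lemma phen_dist_edge_le:
  assumes "phen_E n v w"
  shows "phen_dist u w \<le> phen_dist u v + 1"
  using phen_E_ladder[OF assms] phen_dist_row_step_le phen_dist_rung_step_le by blast

lemma phen_dist_descent_rung:
  assumes "v \<in> phen_V n" "phen_top u \<noteq> phen_top v" "phen_col v mod 3 \<noteq> 1"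
  shows "\<exists>w\<in>phen_V n. phen_E n w v \<and> phen_dist u w + 1 = phen_dist u v"
proof -
  obtain w where w: "w \<in> phen_V n" "phen_E n w v" "phen_col w = phen_col v" "phen_top w \<noteq> phen_top v"
    using phen_rung_neighbour assms(1,3) by blast
  with assms(2) have "phen_dist u w = (phen_col u - phen_col v) + (phen_col v - phen_col u)"
    by (simp add: phen_dist_same_top)
  moreover from assms(2,3) have "phen_dist u v = (phen_col u - phen_col v) + (phen_col v - phen_col u) + 1"
    by (intro phen_dist_other_top) auto
  ultimately show ?thesis using w by auto
qed

lemma phen_dist_descent_left:
  assumes "v \<in> phen_V n" "phen_col u < phen_col v" "phen_top u = phen_top v \<or> phen_col v mod 3 = 1"
    and "3 \<le> phen_col u"
  shows "\<exists>w\<in>phen_V n. phen_E n w v \<and> phen_dist u w + 1 = phen_dist u v"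
proof -
  obtain w where w: "w \<in> phen_V n" "phen_E n w v" "phen_col w + 1 = phen_col v" "phen_top w = phen_top v"
    using phen_left_neighbour assms(1,2,4) by fastforce
  have "phen_dist u w + 1 = phen_dist u v"
  proof (cases "phen_top u = phen_top v")
    case True
    with w(4) assms(2) show ?thesis
      using w(3) by (simp add: phen_dist_same_top)
  next
    case False
    with assms(3) w(3) have "phen_col w mod 3 \<noteq> 1" by presburger
    with False w(4) assms(2) have "phen_dist u w = phen_col w - phen_col u + 1"
      "phen_dist u v = phen_col v - phen_col u + 1"
      using w(3) by (simp_all add: phen_dist_other_top)
    with w(3) assms(2) show ?thesis by linarith
  qed
  with w show ?thesis by blast
qed

lemma phen_dist_descent_right:
  assumes "v \<in> phen_V n" "phen_col v \<le> phen_col u" "phen_top u = phen_top v \<or> phen_col v mod 3 = 1"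
    and "phen_col u \<le> 3 * n + 2" "phen_col v \<noteq> phen_col u \<or> phen_top u \<noteq> phen_top v"
  shows "\<exists>w\<in>phen_V n. phen_E n w v \<and> phen_dist u w + 1 = phen_dist u v"
proof -
  have "phen_col v < 3 * n + 2"
  proof (cases "phen_top u = phen_top v")
    case True
    with assms(2,4,5) show ?thesis by linarith
  next
    case False
    with assms(3) have "phen_col v mod 3 = 1" by blast
    with assms(2,4) show ?thesis by presburger
  qed
  then obtain w where w: "w \<in> phen_V n" "phen_E n w v" "phen_col w = phen_col v + 1" "phen_top w = phen_top v"
    using phen_right_neighbour assms(1) by blast
  have "phen_dist u w + 1 = phen_dist u v"
  proof (cases "phen_top u = phen_top v")
    case True
    with assms(2,5) have "phen_col v < phen_col u" by auto
    with True w(3,4) show ?thesis by (simp add: phen_dist_same_top)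
  next
    case False
    with assms(3) have "phen_col v mod 3 = 1" by blast
    with w(3) have "phen_col w mod 3 \<noteq> 1" by presburger
    with False w(4) have w_dist: "phen_dist u w = (phen_col u - phen_col w) + (phen_col w - phen_col u) + 1"
      by (intro phen_dist_other_top) auto
    show ?thesis
    proof (cases "phen_col u = phen_col v")
      case True
      with False \<open>phen_col v mod 3 = 1\<close> have "phen_dist u v = 3"
        by (intro phen_dist_missing_rung) auto
      with w_dist True w(3) show ?thesis by simp
    next
      case False
      with \<open>phen_top u \<noteq> phen_top v\<close> have "phen_dist u v = phen_col u - phen_col v + 1"
        using assms(2) by (simp add: phen_dist_other_top)
      with w_dist w(3) assms(2) False show ?thesis by linarith
    qed
  qed
  with w show ?thesis by blast
qed

lemma phen_dist_descent:
  assumes u: "u \<in> phen_V n" and v: "v \<in> phen_V n" "v \<noteq> u"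
  shows "\<exists>w\<in>phen_V n. phen_E n w v \<and> phen_dist u w + 1 = phen_dist u v"
proof -
  have ne: "phen_col v \<noteq> phen_col u \<or> phen_top u \<noteq> phen_top v"
    using phen_eq_if_col_top_eq[OF u v(1)] v(2) by metis
  have bounds: "3 \<le> phen_col u" "phen_col u \<le> 3 * n + 2"
    using phen_col_bounds[OF u] by simp_all
  show ?thesis
  proof (cases "phen_top u \<noteq> phen_top v \<and> phen_col v mod 3 \<noteq> 1")
    case True
    then show ?thesis using phen_dist_descent_rung[OF v(1)] by blast
  next
    case False
    then have "phen_top u = phen_top v \<or> phen_col v mod 3 = 1" by blast
    with phen_dist_descent_left[OF v(1) _ _ bounds(1)] phen_dist_descent_right[OF v(1) _ _ bounds(2) ne]
    show ?thesis by (cases "phen_col u < phen_col v") auto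
  qed
qed

lemma gdist_phen:
  assumes "u \<in> phen_V n" "v \<in> phen_V n"
  shows "gdist (phen_E n) u v = phen_dist u v"
  using assms by (intro gdist_eqI[where V = "phen_V n"] phen_dist_self phen_dist_edge_le phen_dist_descent)

lemma phen_neighbours:
  assumes "1 \<le> i" "i \<le> n" "l < 6"
  shows "{w \<in> phen_V n. phen_E n (i, l) w} =
    (if l = 0 then {(i, 5), (i, 1)}
     else if l = 1 then {(i, 0), (i, 2)} \<union> (if i < n then {(i + 1, 5)} else {})
     else if l = 2 then {(i, 1), (i, 3)} \<union> (if i < n then {(i + 1, 4)} else {})
     else if l = 3 then {(i, 2), (i, 4)}
     else if l = 4 then {(i, 3), (i, 5)} \<union> (if 1 < i then {(i - 1, 2)} else {})
     else {(i, 4), (i, 0)} \<union> (if 1 < i then {(i - 1, 1)} else {}))"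
    (is "?N = ?M")
proof (rule set_eqI)
  fix w :: "nat \<times> nat"
  obtain j m where w: "w = (j, m)" by force
  have "l = 0 \<or> l = 1 \<or> l = 2 \<or> l = 3 \<or> l = 4 \<or> l = 5" using assms(3) by auto
  moreover have "m = 0 \<or> m = 1 \<or> m = 2 \<or> m = 3 \<or> m = 4 \<or> m = 5 \<or> 6 \<le> m" by auto
  ultimately show "w \<in> ?N \<longleftrightarrow> w \<in> ?M"
    unfolding w using assms(1,2) by (elim disjE) (auto simp: phen_E_def phen_link_def phen_V_def)
qed

definition phen_deg3 :: "nat \<Rightarrow> (nat \<times> nat) set" where
  "phen_deg3 n = {(i, l). (l = 1 \<or> l = 2) \<and> 1 \<le> i \<and> i < n \<or> (l = 4 \<or> l = 5) \<and> 2 \<le> i \<and> i \<le> n}"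

lemma degree_phen_eq_3_iff:
  assumes "v \<in> phen_V n"
  shows "degree (phen_V n) (phen_E n) v = 3 \<longleftrightarrow> v \<in> phen_deg3 n"
proof -
  obtain i l where v: "v = (i, l)" and i: "1 \<le> i" "i \<le> n" and "l < 6"
    using assms by (cases v) (auto simp: phen_V_def)
  then have "l = 0 \<or> l = 1 \<or> l = 2 \<or> l = 3 \<or> l = 4 \<or> l = 5" by auto
  then show ?thesis
    unfolding v degree_def phen_neighbours[OF i \<open>l < 6\<close>] using i
    by (elim disjE) (auto simp: phen_deg3_def)
qed

lemma phen_deg3_subset: "phen_deg3 n \<subseteq> phen_V n"
  by (auto simp: phen_deg3_def phen_V_def)

lemma finite_phen_deg3: "finite (phen_deg3 n)"
  by (rule finite_subset[OF phen_deg3_subset]) (simp add: phen_V_def)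

lemma phen_deg3_Suc_0: "phen_deg3 (Suc 0) = {}"
  by (auto simp: phen_deg3_def)

lemma phen_deg3_Suc_Suc:
  "phen_deg3 (Suc (Suc m)) = phen_deg3 (Suc m) \<union> {(Suc m, 1), (Suc m, 2), (m + 2, 4), (m + 2, 5)}"
  "phen_deg3 (Suc m) \<inter> {(Suc m, 1), (Suc m, 2), (m + 2, 4), (m + 2, 5)} = {}"
  by (auto simp: phen_deg3_def)

lemma sum_phen_deg3_dist:
  fixes x :: "'a::comm_semiring_1"
  assumes "phen_col w = 3 * m + 5 + c"
  shows "(\<Sum>a\<in>phen_deg3 (Suc m). x ^ phen_dist a w) = (1 + x) ^ 2 * (\<Sum>j<m. x ^ (3 * j + c + 2))"
  using assms
proof (induction m arbitrary: c)
  case 0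
  then show ?case by (simp add: phen_deg3_Suc_0)
next
  case (Suc m)
  have "(\<Sum>a\<in>phen_deg3 (Suc (Suc m)). x ^ phen_dist a w)
      = (\<Sum>a\<in>phen_deg3 (Suc m). x ^ phen_dist a w)
        + (\<Sum>a\<in>{(Suc m, 1), (Suc m, 2), (m + 2, 4), (m + 2, 5)}. x ^ phen_dist a w)"
    unfolding phen_deg3_Suc_Suc(1)
    by (rule sum.union_disjoint) (use finite_phen_deg3 in \<open>auto simp: phen_deg3_def\<close>)
  also have "(\<Sum>a\<in>phen_deg3 (Suc m). x ^ phen_dist a w) = (1 + x) ^ 2 * (\<Sum>j<m. x ^ (3 * j + (c + 3) + 2))"
    using Suc.IH[of "c + 3"] Suc.prems by simp
  also have "(\<Sum>a\<in>{(Suc m, 1), (Suc m, 2), (m + 2, 4), (m + 2, 5)}. x ^ phen_dist a w)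
      = (1 + x) ^ 2 * x ^ (c + 2)"
    using Suc.prems
    by (cases "phen_top w") (simp_all add: phen_dist_apart phen_col_def phen_top_def algebra_simps eval_nat_numeral)
  finally show ?case
    by (simp add: sum.lessThan_Suc_shift algebra_simps power_add eval_nat_numeral del: sum.lessThan_Suc)
qed

lemma pair_sum_phen_deg3_Suc_Suc:
  fixes x :: "'a::comm_ring_1"
  shows "pair_sum (\<lambda>u v. x ^ phen_dist u v) (phen_deg3 (Suc (Suc m)))
    = pair_sum (\<lambda>u v. x ^ phen_dist u v) (phen_deg3 (Suc m))
      + 4 * x + 2 * x ^ 2 + 2 * (1 + x) ^ 3 * (\<Sum>j<m. x ^ (3 * j + 2))"
proof -
  let ?f = "\<lambda>u v. x ^ phen_dist u v"
  let ?D = "phen_deg3 (Suc m)"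
  let ?N = "{(Suc m, 1), (Suc m, 2), (m + 2, 4), (m + 2, 5)}"
  have sym: "\<And>a b. ?f a b = ?f b a" by (simp add: phen_dist_sym)
  have "pair_sum ?f (phen_deg3 (Suc (Suc m))) = pair_sum ?f ?D + pair_sum ?f ?N + (\<Sum>b\<in>?N. \<Sum>a\<in>?D. ?f a b)"
    unfolding phen_deg3_Suc_Suc(1) sum.swap[of _ ?D]
    by (rule pair_sum_union[OF finite_phen_deg3 _ phen_deg3_Suc_Suc(2) sym]) simp
  also have "pair_sum ?f ?N = 4 * x + 2 * x ^ 2"
  proof -
    have "phen_dist (Suc m, 2) (Suc m, 1) = 1" "phen_dist (m + 2, 4) (Suc m, 1) = 2"
      "phen_dist (m + 2, 5) (Suc m, 1) = 1" "phen_dist (m + 2, 4) (Suc m, 2) = 1"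
      "phen_dist (m + 2, 5) (Suc m, 2) = 2" "phen_dist (m + 2, 5) (m + 2, 4) = 1"
      by (simp_all add: phen_dist_def phen_col_def phen_top_def)
    then show ?thesis by (simp add: pair_sum_insert[OF _ _ sym] power2_eq_square)
  qed
  also have "(\<Sum>b\<in>?N. \<Sum>a\<in>?D. ?f a b)
      = 2 * (1 + x) ^ 2 * (\<Sum>j<m. x ^ (3 * j + 2)) + 2 * (1 + x) ^ 2 * (\<Sum>j<m. x * x ^ (3 * j + 2))"
  proof -
    have "phen_col (Suc m, 1) = 3 * m + 5 + 0" "phen_col (Suc m, 2) = 3 * m + 5 + 0"
      "phen_col (m + 2, 4) = 3 * m + 5 + 1" "phen_col (m + 2, 5) = 3 * m + 5 + 1"
      by (simp_all add: phen_col_def)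
    then show ?thesis
      by (simp add: sum_phen_deg3_dist)
  qed
  finally show ?thesis
    unfolding sum_distrib_left[symmetric] by (simp add: power3_eq_cube power2_eq_square algebra_simps)
qed

lemma pair_sum_phen_deg3:
  fixes x :: "'a::comm_ring_1"
  shows "pair_sum (\<lambda>u v. x ^ phen_dist u v) (phen_deg3 (m + 2))
    = of_nat (4 * (m + 1)) * x + of_nat (2 * (m + 1)) * x ^ 2 + 2 * x ^ 2 * (1 + x) ^ 3 * ramp (x ^ 3) m"
proof (induction m)
  case 0
  show ?case using pair_sum_phen_deg3_Suc_Suc[of x 0] by (simp add: phen_deg3_Suc_0)
next
  case (Suc m)
  have "(\<Sum>j<Suc m. x ^ (3 * j + 2)) = x ^ 2 * (\<Sum>j<Suc m. (x ^ 3) ^ j)"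
    by (simp add: sum_distrib_left power_add power2_eq_square mult_ac flip: power_mult del: sum.lessThan_Suc)
  with Suc.IH pair_sum_phen_deg3_Suc_Suc[of x "Suc m"] show ?case
    by (simp add: ramp_Suc algebra_simps del: sum.lessThan_Suc)
qed

lemma base_poly_phen:
  "base_poly (phen_V n) (phen_E n) 3 x = pair_sum (\<lambda>u v. x ^ phen_dist u v) (phen_deg3 n)"
proof -
  have "{(u, v). u \<in> phen_V n \<and> v \<in> phen_V n \<and> u < v
        \<and> degree (phen_V n) (phen_E n) u = 3 \<and> degree (phen_V n) (phen_E n) v = 3}
      = {(u, v). u \<in> phen_deg3 n \<and> v \<in> phen_deg3 n \<and> u < v}"
    using degree_phen_eq_3_iff phen_deg3_subset by blast
  then show ?thesis
    unfolding base_poly_def pair_sum_def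
    by (auto intro!: sum.cong dest!: subsetD[OF phen_deg3_subset] simp: gdist_phen)
qed

lemma phenylene_sums_eq_ramp:
  fixes x :: "'a::comm_ring_1"
  assumes n: "n = m + 2"
  shows "of_nat (4 * (n - 1)) * x
    + 6 * (\<Sum>k = 2..n - 1. of_nat (n - k) * x ^ (3 * k - 2))
    + 2 * (\<Sum>k = 1..n - 1. of_nat (2 * n - 2 * k - 1) * x ^ (3 * k - 1))
    + 6 * (\<Sum>k = 1..n - 2. of_nat (n - k - 1) * x ^ (3 * k))
    = of_nat (4 * (m + 1)) * x + of_nat (2 * (m + 1)) * x ^ 2
      + 2 * x ^ 2 * (1 + x) ^ 3 * ramp (x ^ 3) m"
proof -
  have s1: "(\<Sum>k = 2..n - 1. of_nat (n - k) * x ^ (3 * k - 2)) = x ^ 4 * ramp (x ^ 3) m"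
    by (simp add: sum_atLeastAtMost_eq_sum_lessThan n ramp_def sum_distrib_left power_add mult_ac
        flip: power_mult)
  have s2: "(\<Sum>k = 1..n - 1. of_nat (2 * n - 2 * k - 1) * x ^ (3 * k - 1))
      = x ^ 2 * (ramp (x ^ 3) (Suc m) + ramp (x ^ 3) m)"
    unfolding ramp_Suc_add_ramp sum_distrib_left sum_atLeastAtMost_eq_sum_lessThan
  proof (rule sum.cong)
    show "{..<Suc (n - 1) - 1} = {..<Suc m}" using n by simp
  next
    fix j assume "j \<in> {..<Suc m}"
    then have "2 * n - 2 * (j + 1) - 1 = 2 * m + 1 - 2 * j" "3 * (j + 1) - 1 = 3 * j + 2"
      using n by auto
    then show "of_nat (2 * n - 2 * (j + 1) - 1) * x ^ (3 * (j + 1) - 1)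
        = x ^ 2 * (of_nat (2 * m + 1 - 2 * j) * (x ^ 3) ^ j)"
      by (simp only: power_add flip: power_mult) (simp add: mult_ac)
  qed
  have s3: "(\<Sum>k = 1..n - 2. of_nat (n - k - 1) * x ^ (3 * k)) = x ^ 3 * ramp (x ^ 3) m"
    by (simp add: sum_atLeastAtMost_eq_sum_lessThan n ramp_def sum_distrib_left power_add mult_ac
        flip: power_mult)
  show ?thesis unfolding s1 s2 s3 ramp_Suc_shift using n
    by (simp add: algebra_simps eval_nat_numeral)
qed

theorem theorem2p3:
  fixes n :: nat and x :: "'a::comm_ring_1"
  assumes "n \<ge> 2"
  shows "base_poly (phen_V n) (phen_E n) 3 x =
    of_nat (4 * (n - 1)) * x
    + 6 * (\<Sum>k = 2..n - 1. of_nat (n - k) * x ^ (3 * k - 2))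
    + 2 * (\<Sum>k = 1..n - 1. of_nat (2 * n - 2 * k - 1) * x ^ (3 * k - 1))
    + 6 * (\<Sum>k = 1..n - 2. of_nat (n - k - 1) * x ^ (3 * k))"
proof -
  obtain m where n: "n = m + 2"
    using assms le_Suc_ex by (metis add.commute)
  show ?thesis
    unfolding base_poly_phen n pair_sum_phen_deg3 phenylene_sums_eq_ramp[OF refl] ..
qed

end
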